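(* Let $X$ be a topological vector space over $\mathbb{K}$ ($\mathbb{K}=\mathbb{R}$ or $\mathbb{C}$) and let $\alpha$ be an infinite cardinal with $w(X)\le \dim(X)=\alpha$. Then there is a family $\{Y_\kappa\}_{\kappa<\alpha}$ of linear subspaces of $X$ such that: (1) each $Y_\kappa$ is a dense linear subspace of $X$ with $\dim(Y_\kappa)=\alpha$; (2) the family $\{Y_\kappa\}_{\kappa<\alpha}$ is linearly independent, i.e., the sum $\sum_{\kappa<\alpha}Y_\kappa$ is direct (in particular $Y_{\kappa_1}\cap Y_{\kappa_2}=\{0\}$ whenever $\kappa_1\neq\kappa_2$).
   Context: A topological vector space is a vector space with a topology making addition and scalar multiplication continuous. The weight $w(X)$ of a topological space is the smallest cardinality of a base for its topology. Indices $\kappa<\alpha$ range over ordinals less than $\alpha$. *)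

theory Defs
  imports "HOL-Analysis.Analysis" "HOL-Library.Equipollence"
begin

definition is_tvs :: "('k::{field,topological_space} \<Rightarrow> 'a::{ab_group_add,topological_space} \<Rightarrow> 'a) \<Rightarrow> bool" where
  "is_tvs sc \<longleftrightarrow> vector_space sc
     \<and> continuous_on UNIV (\<lambda>p::'a \<times> 'a. fst p + snd p)
     \<and> continuous_on UNIV (\<lambda>p::'k \<times> 'a. sc (fst p) (snd p))"

definition weight_le :: "'a::topological_space itself \<Rightarrow> 'i set \<Rightarrow> bool" where
  "weight_le _ I \<longleftrightarrow> (\<exists>\<B>::'a set set. topological_basis \<B> \<and> \<B> \<lesssim> I)"

definition has_dim :: "('k::field \<Rightarrow> 'a::ab_group_add \<Rightarrow> 'a) \<Rightarrow> 'a set \<Rightarrow> 'i set \<Rightarrow> bool" where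
  "has_dim sc Y I \<longleftrightarrow> (\<exists>B. B \<subseteq> Y \<and> \<not> module.dependent sc B \<and> module.span sc B = Y \<and> B \<approx> I)"

definition indep_family :: "('i \<Rightarrow> 'a::ab_group_add set) \<Rightarrow> 'i set \<Rightarrow> bool" where
  "indep_family Y I \<longleftrightarrow> (\<forall>F y. finite F \<longrightarrow> F \<subseteq> I \<longrightarrow> (\<forall>k\<in>F. y k \<in> Y k) \<longrightarrow> sum y F = 0
      \<longrightarrow> (\<forall>k\<in>F. y k = 0))"

text \<open>The theorem for a given scalar field: X = UNIV::'a set, alpha = |I|.\<close>
definition dense_subspaces_claim :: "('k::{field,topological_space} \<Rightarrow> 'a::{ab_group_add,topological_space} \<Rightarrow> 'a) \<Rightarrow> 'i set \<Rightarrow> bool" where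
  "dense_subspaces_claim sc I \<longleftrightarrow>
    (is_tvs sc \<and> infinite I \<and> weight_le TYPE('a) I \<and> has_dim sc UNIV I \<longrightarrow>
     (\<exists>Y :: 'i \<Rightarrow> 'a set.
        (\<forall>k\<in>I. module.subspace sc (Y k) \<and> closure (Y k) = UNIV \<and> has_dim sc (Y k) I)
        \<and> indep_family Y I))"

end

(* A subspace containing a nonempty open set U is the whole space: for u in U and any v,
   continuity puts u + t v in U for some t \<noteq> 0, because 0 is not isolated in the scalar
   field. A set of fewer than \<alpha> vectors spans a proper subspace, since each of its vectors
   uses only finitely many vectors of a Hamel basis of size \<alpha>. Hence, enumerating a base
   {U i} and the set I \<times> I in order type \<alpha>, transfinite recursion picks x (k, i) in U i
   outside the span of all earlier choices. These vectors are linearly independent, and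
   Y k = span {x (k, i) | i} meets every basic open set. *)

theory Submission
  imports Defs
begin

unbundle cardinal_syntax

lemma is_tvs_continuous_on_line:
  fixes sc :: "'k::{field,topological_space} \<Rightarrow> 'a::{ab_group_add,topological_space} \<Rightarrow> 'a"
  assumes "is_tvs sc"
  shows "continuous_on UNIV (\<lambda>t. u + sc t v)"
proof -
  have add: "continuous_on UNIV (\<lambda>p::'a \<times> 'a. fst p + snd p)"
    and scale: "continuous_on UNIV (\<lambda>p::'k \<times> 'a. sc (fst p) (snd p))"
    using assms by (auto simp: is_tvs_def)
  have "continuous_on UNIV (\<lambda>t::'k. sc t v)"
    using continuous_on_compose2[OF scale, of UNIV "\<lambda>t. (t, v)"] by (simp add: continuous_intros)
  then show ?thesis
    using continuous_on_compose2[OF add, of UNIV "\<lambda>t. (u, sc t v)"] by (simp add: continuous_intros)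
qed

lemma is_tvs_subspace_eq_UNIV_if_open_subset:
  fixes sc :: "'k::{field,perfect_space} \<Rightarrow> 'a::{ab_group_add,topological_space} \<Rightarrow> 'a"
  assumes tvs: "is_tvs sc" and S: "module.subspace sc S"
    and U: "open U" "U \<noteq> {}" "U \<subseteq> S"
  shows "S = UNIV"
proof -
  interpret vector_space sc
    using tvs by (simp add: is_tvs_def)
  obtain u where u: "u \<in> U"
    using U(2) by blast
  have "v \<in> S" for v
  proof -
    let ?W = "(\<lambda>t. u + sc t v) -` U"
    have "open ?W"
      using continuous_on_open_vimage[OF open_UNIV] is_tvs_continuous_on_line[OF tvs] U(1) by auto
    then have "?W \<noteq> {0}"
      by (metis not_open_singleton)
    moreover have "0 \<in> ?W"
      using u by simp
    ultimately obtain t where t: "t \<in> ?W" "t \<noteq> 0"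
      by blast
    then have "(u + sc t v) - u \<in> S"
      using S U(3) u subspace_diff by blast
    then have "sc t v \<in> S"
      by simp
    then have "sc (inverse t) (sc t v) \<in> S"
      by (rule subspace_scale[OF S])
    then show ?thesis
      using t(2) by simp
  qed
  then show ?thesis
    by blast
qed

lemma closure_eq_UNIV_iff_meets_open:
  "closure S = UNIV \<longleftrightarrow> (\<forall>W. open W \<and> W \<noteq> {} \<longrightarrow> S \<inter> W \<noteq> {})"
  using dense_intersects_open[of euclidean S] by (simp flip: open_openin)

lemma weight_le_obtain_open_family:
  fixes I :: "'i set"
  assumes "weight_le TYPE('a::topological_space) I"
  obtains U :: "'i \<Rightarrow> 'a::topological_space set"
  where "\<And>i. open (U i)" "\<And>i. U i \<noteq> {}" "\<And>W. open W \<Longrightarrow> W \<noteq> {} \<Longrightarrow> \<exists>i\<in>I. U i \<subseteq> W"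
proof -
  obtain \<B> :: "'a set set" where \<B>: "topological_basis \<B>" "\<B> \<lesssim> I"
    using assms by (auto simp: weight_le_def)
  define N where "N = \<B> - {{}}"
  obtain B0 where "B0 \<in> \<B>" "undefined \<in> B0"
    using topological_basisE[OF \<B>(1) open_UNIV UNIV_I] by metis
  then have B0: "B0 \<in> N"
    by (auto simp: N_def)
  have "N \<lesssim> I"
    using lepoll_trans[OF subset_imp_lepoll \<B>(2)] by (auto simp: N_def)
  then obtain h where h: "N \<subseteq> h ` I"
    by (auto simp: lepoll_iff)
  define U where "U i = (if h i \<in> N then h i else B0)" for i
  have UN: "U i \<in> N" for i
    using B0 by (simp add: U_def)
  show thesis
  proof
    show "open (U i)" for i
      using UN[of i] topological_basis_open[OF \<B>(1)] by (auto simp: N_def)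
    show "U i \<noteq> {}" for i
      using UN[of i] by (auto simp: N_def)
    show "\<exists>i\<in>I. U i \<subseteq> W" if "open W" "W \<noteq> {}" for W
    proof -
      obtain w where "w \<in> W"
        using \<open>W \<noteq> {}\<close> by blast
      then obtain B where B: "B \<in> \<B>" "w \<in> B" "B \<subseteq> W"
        using topological_basisE[OF \<B>(1) \<open>open W\<close>] by metis
      then have "B \<in> N"
        by (auto simp: N_def)
      then obtain i where "i \<in> I" "B = h i"
        using h by blast
      then show ?thesis
        using B(3) \<open>B \<in> N\<close> by (auto simp: U_def)
    qed
  qed
qed

lemma (in vector_space) infinite_basis_card_le_spanning:
  assumes H: "independent H" "span H = UNIV" "infinite H" and A: "span A = UNIV"
  shows "|H| \<le>o |A|"
proof -
  have "\<exists>T. finite T \<and> T \<subseteq> H \<and> x \<in> span T" for x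
  proof -
    have "x \<in> span H"
      using H(2) by simp
    then show ?thesis
      unfolding span_explicit by blast
  qed
  then obtain T where T: "\<And>x. finite (T x)" "\<And>x. T x \<subseteq> H" "\<And>x. x \<in> span (T x)"
    by metis
  define E where "E = (\<Union>x\<in>A. T x)"
  have "A \<subseteq> span E"
  proof
    fix x assume "x \<in> A"
    then have "T x \<subseteq> E"
      by (auto simp: E_def)
    then show "x \<in> span E"
      using T(3) span_mono by blast
  qed
  then have span_E: "span E = UNIV"
    using A span_minimal[OF _ subspace_span] by blast
  have "H \<subseteq> E"
  proof
    fix b assume "b \<in> H"
    show "b \<in> E"
    proof (rule ccontr)
      assume "b \<notin> E"
      then have "E \<subseteq> H - {b}"
        using T(2) unfolding E_def by blast
      then have "b \<in> span (H - {b})"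
        using span_E span_mono by blast
      then show False
        using H(1) \<open>b \<in> H\<close> dependent_def by blast
    qed
  qed
  then have "infinite E"
    using H(3) finite_subset by blast
  then have "infinite A"
    using T(1) unfolding E_def by blast
  have "|T x| \<le>o |A|" for x
    using finite_ordLess_infinite[OF card_of_Well_order card_of_Well_order] T(1) \<open>infinite A\<close>
    by (simp add: Field_card_of) (blast intro: ordLess_imp_ordLeq)
  then have "|E| \<le>o |A|"
    unfolding E_def using card_of_UNION_ordLeq_infinite[OF \<open>infinite A\<close> ordIso_imp_ordLeq[OF card_of_refl]]
    by blast
  then show ?thesis
    using ordLeq_transitive[OF card_of_mono1[OF \<open>H \<subseteq> E\<close>]] by blast
qed

lemma (in wo_rel) finite_has_greatest:
  assumes "finite D" "D \<noteq> {}" "D \<subseteq> Field r"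
  shows "\<exists>j\<in>D. \<forall>d\<in>D. (d, j) \<in> r"
  using assms
proof (induction rule: finite_ne_induct)
  case (singleton x)
  then show ?case
    using REFL by (auto simp: refl_on_def)
next
  case (insert x D)
  then obtain m where m: "m \<in> D" "\<forall>d\<in>D. (d, m) \<in> r"
    by auto
  have "x \<in> Field r" "m \<in> Field r"
    using insert.prems m(1) by auto
  then have "(x, max2 x m) \<in> r" "(m, max2 x m) \<in> r" "max2 x m \<in> insert x D"
    using max2_greater_among[of x m] m(1) by auto
  then show ?case
    using m(2) TRANS by (metis insertE transD)
qed

lemma (in vector_space) inj_on_if_not_in_span_underS:
  assumes "Well_order r" and new: "\<And>j. j \<in> Field r \<Longrightarrow> f j \<notin> span (f ` underS r j)"
  shows "inj_on f (Field r)"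
proof (rule inj_onI, rule ccontr)
  fix i j assume ij: "i \<in> Field r" "j \<in> Field r" "f i = f j" "i \<noteq> j"
  then have "i \<in> underS r j \<or> j \<in> underS r i"
    using wo_rel.TOTALS[of r] assms(1) by (auto simp: wo_rel_def underS_def)
  then show False
    using new ij span_base by (metis imageI)
qed

lemma (in vector_space) independent_image_if_not_in_span_underS:
  assumes wo: "Well_order r" and new: "\<And>j. j \<in> Field r \<Longrightarrow> f j \<notin> span (f ` underS r j)"
  shows "independent (f ` Field r)"
proof -
  have independent_finite: "independent (f ` D)" if "finite D" "D \<subseteq> Field r" for D
    using that
  proof (induction D rule: finite_remove_induct)
    case empty
    show ?case
      using independent_empty by simp
  next
    case (remove D)
    obtain j where j: "j \<in> D" "\<forall>d\<in>D. (d, j) \<in> r"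
      using wo_rel.finite_has_greatest[of r D] wo remove.hyps remove.prems by (auto simp: wo_rel_def)
    then have "f ` (D - {j}) \<subseteq> f ` underS r j"
      by (auto simp: underS_def)
    then have "f j \<notin> span (f ` (D - {j}))"
      using new[of j] j(1) remove.prems span_mono by blast
    moreover have "independent (f ` (D - {j}))"
      using remove.IH[OF j(1)] remove.prems by blast
    moreover have "f ` D = insert (f j) (f ` (D - {j}))"
      using j(1) by blast
    ultimately show ?case
      using independent_insertI by simp
  qed
  show ?thesis
  proof
    assume "dependent (f ` Field r)"
    then obtain T where "finite T" "T \<subseteq> f ` Field r" "dependent T"
      unfolding dependent_explicit by blast
    moreover obtain D where "D \<subseteq> Field r" "finite D" "T = f ` D"
      using finite_subset_image[OF calculation(1,2)] by blast
    ultimately show False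
      using independent_finite by blast
  qed
qed

lemma (in vector_space) independent_selection:
  fixes U :: "'i \<Rightarrow> 'b set"
  assumes avoid: "\<And>j A. j \<in> K \<Longrightarrow> |A| <o |K| \<Longrightarrow> \<not> U j \<subseteq> span A"
  obtains f where "inj_on f K" "independent (f ` K)" "\<And>j. j \<in> K \<Longrightarrow> f j \<in> U j"
proof -
  let ?r = "|K|"
  have wo: "wo_rel ?r"
    by (simp add: wo_rel_def card_of_Well_order)
  define H where "H g j = (SOME y. y \<in> U j \<and> y \<notin> span (g ` underS ?r j))" for g j
  define f where "f = wo_rel.worec ?r H"
  have "wo_rel.adm_wo ?r H"
    using wo by (simp add: wo_rel.adm_wo_def H_def cong: image_cong)
  then have f_eq: "f j = H f j" for j
    using wo_rel.worec_fixpoint[OF wo] by (metis f_def)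
  have new: "f j \<in> U j \<and> f j \<notin> span (f ` underS ?r j)" if "j \<in> K" for j
  proof -
    have "|underS ?r j| <o ?r"
      using card_of_underS[OF card_of_Card_order] that by (simp add: Field_card_of)
    then have "|f ` underS ?r j| <o ?r"
      using card_of_image ordLeq_ordLess_trans by blast
    then have "\<exists>y. y \<in> U j \<and> y \<notin> span (f ` underS ?r j)"
      using avoid[OF that] by blast
    then show ?thesis
      unfolding f_eq[of j] H_def by (rule someI_ex)
  qed
  have f_new: "f j \<notin> span (f ` underS ?r j)" if "j \<in> Field ?r" for j
    using new that by (simp add: Field_card_of)
  show thesis
  proof
    show "inj_on f K"
      using inj_on_if_not_in_span_underS[OF card_of_Well_order f_new] by (simp add: Field_card_of)
    show "independent (f ` K)"
      using independent_image_if_not_in_span_underS[OF card_of_Well_order f_new]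
      by (simp add: Field_card_of)
    show "f j \<in> U j" if "j \<in> K" for j
      using new[OF that] by blast
  qed
qed

lemma (in vector_space) indep_family_span_disjoint:
  assumes B: "independent (\<Union>(P ` K))" and disj: "disjoint_family_on P K"
  shows "indep_family (\<lambda>k. span (P k)) K"
  unfolding indep_family_def
proof (intro allI impI ballI)
  fix F y k0
  assume F: "finite F" "F \<subseteq> K" and y: "\<forall>k\<in>F. y k \<in> span (P k)"
    and sum0: "sum y F = 0" and k0: "k0 \<in> F"
  let ?R = "representation (\<Union>(P ` K))"
  have yB: "y k \<in> span (\<Union>(P ` K))" if "k \<in> F" for k
    using y F that span_mono[of "P k" "\<Union>(P ` K)"] by blast
  have R_eq: "?R (y k) = representation (P k) (y k)" if "k \<in> F" for k
    using representation_extend[OF B] y F that by blast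
  have R_sum: "(\<Sum>k\<in>F. ?R (y k) b) = 0" for b
  proof -
    have "(\<lambda>b. \<Sum>k\<in>F. ?R (y k) b) = ?R (sum y F)"
      using representation_sum[OF B, of F y] yB by simp
    then show ?thesis
      using sum0 representation_zero by metis
  qed
  have "?R (y k0) b = 0" for b
  proof (cases "b \<in> P k0")
    case True
    have "?R (y k) b = 0" if "k \<in> F - {k0}" for k
    proof -
      have "b \<notin> P k"
        using disj True that k0 F(2) by (auto simp: disjoint_family_on_def)
      then show ?thesis
        using R_eq[of k] that representation_ne_zero by fastforce
    qed
    then have "(\<Sum>k\<in>F. ?R (y k) b) = ?R (y k0) b"
      using F(1) k0 by (simp add: sum.remove)
    then show ?thesis
      using R_sum by simp
  next
    case False
    then show ?thesis
      using R_eq[OF k0] representation_ne_zero by fastforce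
  qed
  then show "y k0 = 0"
    using sum_nonzero_representation_eq[OF B yB[OF k0]] by simp
qed

lemma dense_subspaces_claim_perfect_field:
  fixes sc :: "'k::{field,perfect_space} \<Rightarrow> 'a::{ab_group_add,topological_space} \<Rightarrow> 'a"
    and I :: "'i set"
  shows "dense_subspaces_claim sc I"
  unfolding dense_subspaces_claim_def
proof (intro impI, elim conjE)
  assume tvs: "is_tvs sc" and I: "infinite I"
    and weight: "weight_le TYPE('a) I" and dim: "has_dim sc UNIV I"
  interpret vector_space sc
    using tvs by (simp add: is_tvs_def)
  obtain U :: "'i \<Rightarrow> 'a set" where U_open: "\<And>i. open (U i)" and U_ne: "\<And>i. U i \<noteq> {}"
    and U_base: "\<And>W. open W \<Longrightarrow> W \<noteq> {} \<Longrightarrow> \<exists>i\<in>I. U i \<subseteq> W"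
    using weight_le_obtain_open_family[OF weight] by metis
  obtain H where H: "independent H" "span H = UNIV" "H \<approx> I"
    using dim by (auto simp: has_dim_def)
  have avoid: "\<not> U i \<subseteq> span A" if A: "|A| <o |I \<times> I|" for i A
  proof
    assume "U i \<subseteq> span A"
    then have "span A = UNIV"
      using is_tvs_subspace_eq_UNIV_if_open_subset[OF tvs subspace_span U_open U_ne] by blast
    then have "|H| \<le>o |A|"
      using infinite_basis_card_le_spanning H eqpoll_finite_iff I by blast
    moreover have "|I \<times> I| =o |H|"
    proof -
      have "|H| =o |I|"
        using H(3) eqpoll_iff_card_of_ordIso by blast
      then show ?thesis
        using ordIso_transitive[OF card_of_Times_same_infinite[OF I] ordIso_symmetric] by blast
    qed
    ultimately show False
      using ordLess_irreflexive ordLess_ordLeq_trans[OF ordLess_ordIso_trans[OF A]] by blast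
  qed
  \<comment> \<open>The first coordinate of the index selects the subspace, the second the basic open set.\<close>
  obtain x where x_inj: "inj_on x (I \<times> I)" and x_indep: "independent (x ` (I \<times> I))"
    and x_in: "\<And>j. j \<in> I \<times> I \<Longrightarrow> x j \<in> U (snd j)"
    using independent_selection[of "I \<times> I" "\<lambda>j. U (snd j)"] avoid by blast
  define Y where "Y k = span (x ` ({k} \<times> I))" for k
  have "indep_family Y I"
    unfolding Y_def
  proof (rule indep_family_span_disjoint)
    have "(\<Union>k\<in>I. x ` ({k} \<times> I)) = x ` (I \<times> I)"
      by blast
    then show "independent (\<Union>k\<in>I. x ` ({k} \<times> I))"
      using x_indep by simp
    show "disjoint_family_on (\<lambda>k. x ` ({k} \<times> I)) I"
      using x_inj by (auto simp: disjoint_family_on_def inj_on_def)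
  qed
  moreover have "subspace (Y k) \<and> closure (Y k) = UNIV \<and> has_dim sc (Y k) I" if k: "k \<in> I" for k
  proof (intro conjI)
    show "subspace (Y k)"
      by (simp add: Y_def)
    show "closure (Y k) = UNIV"
      unfolding closure_eq_UNIV_iff_meets_open
    proof (intro allI impI)
      fix W :: "'a set" assume "open W \<and> W \<noteq> {}"
      then obtain i where i: "i \<in> I" "U i \<subseteq> W"
        using U_base by blast
      have "x (k, i) \<in> Y k"
        unfolding Y_def using i(1) by (intro span_base imageI) simp
      moreover have "x (k, i) \<in> W"
        using x_in[of "(k, i)"] k i by auto
      ultimately show "Y k \<inter> W \<noteq> {}"
        by blast
    qed
    have sub: "{k} \<times> I \<subseteq> I \<times> I"
      using k by blast
    have "x ` ({k} \<times> I) \<approx> I"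
      using eqpoll_trans[OF inj_on_image_eqpoll_self[OF inj_on_subset[OF x_inj sub]]
          times_singleton_eqpoll] .
    moreover have "independent (x ` ({k} \<times> I))"
      using x_indep dependent_mono[OF _ image_mono[OF sub]] by blast
    ultimately show "has_dim sc (Y k) I"
      unfolding has_dim_def Y_def using span_superset by blast
  qed
  ultimately show "\<exists>Y. (\<forall>k\<in>I. subspace (Y k) \<and> closure (Y k) = UNIV \<and> has_dim sc (Y k) I)
      \<and> indep_family Y I"
    by blast
qed

theorem theorem2p2:
  fixes scaleR' :: "real \<Rightarrow> 'a::{ab_group_add,topological_space} \<Rightarrow> 'a"
    and I :: "'i set"
    and scaleC' :: "complex \<Rightarrow> 'b::{ab_group_add,topological_space} \<Rightarrow> 'b"
    and J :: "'j set"
  shows "dense_subspaces_claim scaleR' I \<and> dense_subspaces_claim scaleC' J"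
  by (intro conjI dense_subspaces_claim_perfect_field)

end
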